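(* Let $\Omega\subseteq\mathbb R^n$ be a bounded open set, let $p_j\to\infty$, and for each $j$ let $\xi_{p_j}\in L^{p_j}(\Omega)$ with $\xi_{p_j}\ge0$ a.e. Suppose there is $\xi_\infty\in L^\infty(\Omega)$ with $\xi_{p_j}\rightharpoonup\xi_\infty$ weakly in $L^k(\Omega)$ for every $k\in(1,\infty)$. Then $$\liminf_{j\to\infty}\int_\Omega\xi_{p_j}\,d[\mu_{p_j}(\xi_{p_j})]\ \ge\ \|\xi_\infty\|_{L^\infty(\Omega)}.$$
   Context: $|x|_{(p)}:=\sqrt{|x|^2+p^{-2}}$, $\|f\|_{\dot L^p(\Omega)}:=\big(\frac{1}{\mathcal L^n(\Omega)}\int_\Omega|f|_{(p)}^p\,d\mathcal L^n\big)^{1/p}$, and $\mu_p(\xi):=\dfrac{|\xi|_{(p)}^{p-2}\,\xi}{\mathcal L^n(\Omega)\,\|\xi\|_{\dot L^p(\Omega)}^{p-1}}\,\mathcal L^n\llcorner\Omega$, so that $\int_\Omega\xi\,d[\mu_p(\xi)]=\frac{1}{\mathcal L^n(\Omega)}\int_\Omega\frac{|\xi|_{(p)}^{p-2}\xi^2}{\|\xi\|_{\dot L^p(\Omega)}^{p-1}}\,d\mathcal L^n$. *)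

theory Defs
  imports "HOL-Analysis.Analysis" "HOL-Probability.Essential_Supremum"
begin

definition regabs :: "real \<Rightarrow> real \<Rightarrow> real" where
  "regabs p x = sqrt (x\<^sup>2 + inverse (p\<^sup>2))"

definition dotLp :: "'a::euclidean_space set \<Rightarrow> real \<Rightarrow> ('a \<Rightarrow> real) \<Rightarrow> real" where
  "dotLp \<Omega> p f = ((1 / measure lebesgue \<Omega>) * (LINT x:\<Omega>|lebesgue. regabs p (f x) powr p)) powr (1 / p)"

text \<open>The pairing  int_\<Omega> xi d[mu_p(xi)], with mu_p(xi) the measure of density
  |xi|_(p)^(p-2) xi / (L^n(\<Omega>) ||xi||^(p-1)) w.r.t. Lebesgue measure on \<Omega>.\<close>
definition mu_pairing :: "'a::euclidean_space set \<Rightarrow> real \<Rightarrow> ('a \<Rightarrow> real) \<Rightarrow> real" where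
  "mu_pairing \<Omega> p \<xi> =
     (LINT x:\<Omega>|lebesgue. \<xi> x *
        (regabs p (\<xi> x) powr (p - 2) * \<xi> x / (measure lebesgue \<Omega> * dotLp \<Omega> p \<xi> powr (p - 1))))"

definition in_Lp :: "'a::euclidean_space set \<Rightarrow> real \<Rightarrow> ('a \<Rightarrow> real) \<Rightarrow> bool" where
  "in_Lp \<Omega> q f \<longleftrightarrow> set_borel_measurable lebesgue \<Omega> f \<and> set_integrable lebesgue \<Omega> (\<lambda>x. \<bar>f x\<bar> powr q)"

definition in_Linf :: "'a::euclidean_space set \<Rightarrow> ('a \<Rightarrow> real) \<Rightarrow> bool" where
  "in_Linf \<Omega> f \<longleftrightarrow> set_borel_measurable lebesgue \<Omega> f \<and> (\<exists>C. AE x in lebesgue. x \<in> \<Omega> \<longrightarrow> \<bar>f x\<bar> \<le> C)"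

definition Linf_norm :: "'a::euclidean_space set \<Rightarrow> ('a \<Rightarrow> real) \<Rightarrow> ereal" where
  "Linf_norm \<Omega> f = esssup (restrict_space lebesgue \<Omega>) (\<lambda>x. ereal \<bar>f x\<bar>)"

definition weak_conv_Lk :: "'a::euclidean_space set \<Rightarrow> real \<Rightarrow> (nat \<Rightarrow> 'a \<Rightarrow> real) \<Rightarrow> ('a \<Rightarrow> real) \<Rightarrow> bool" where
  "weak_conv_Lk \<Omega> k f finf \<longleftrightarrow> in_Lp \<Omega> k finf \<and> (\<forall>\<^sub>F j in sequentially. in_Lp \<Omega> k (f j)) \<and>
     (\<forall>g. in_Lp \<Omega> (k / (k - 1)) g \<longrightarrow>
        (\<lambda>j. LINT x:\<Omega>|lebesgue. f j x * g x) \<longlonglongrightarrow> (LINT x:\<Omega>|lebesgue. finf x * g x))"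

end

theory Submission
  imports Defs
begin

text \<open>
  Write N for the regularised norm of \<open>\<xi>\<close> and a for its regularised modulus. Since
  \<open>\<xi>\<^sup>2 = a\<^sup>2 - p\<^sup>-\<^sup>2\<close>, the pairing is \<open>(\<integral> a^p - p\<^sup>-\<^sup>2 \<integral> a^(p-2)) / (|\<Omega>| N^(p-1))\<close>;
  splitting at a = N bounds \<open>\<integral> a^(p-2)\<close> by \<open>2 |\<Omega>| N^(p-2)\<close>, and with \<open>N \<ge> 1/p\<close> the pairing
  is at least N - 2/p. So it suffices that liminf N is at least the essential supremum of
  \<open>|\<xi>\<^sub>\<infinity>|\<close>. For s below it, test against \<open>g = sgn \<xi>\<^sub>\<infinity>\<close> on \<open>A = {|\<xi>\<^sub>\<infinity>| > s}\<close>: weak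
  convergence makes \<open>\<integral> \<xi> g\<close> eventually exceed \<open>c |A|\<close> for any c < s, while splitting a at the
  level l N gives \<open>\<integral> \<xi> g \<le> N (l |A| + |\<Omega>| / l^(p-1))\<close>; as \<open>l^(p-1) \<rightarrow> \<infinity>\<close> for every l > 1,
  N eventually exceeds any u < s.
\<close>

lemma power2_regabs: "(regabs p x)\<^sup>2 = x\<^sup>2 + 1 / p\<^sup>2"
  unfolding regabs_def by (simp add: divide_inverse)

lemma regabs_ge_inverse: "0 < p \<Longrightarrow> 1 / p \<le> regabs p x"
  unfolding regabs_def by (rule real_le_rsqrt) (simp add: power_one_over inverse_eq_divide)

lemma regabs_pos: "0 < p \<Longrightarrow> 0 < regabs p x"
  by (rule less_le_trans[OF _ regabs_ge_inverse]) auto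

lemma abs_le_regabs: "\<bar>x\<bar> \<le> regabs p x"
  unfolding regabs_def by (rule real_le_rsqrt) simp

lemma regabs_le_abs_add: "0 < p \<Longrightarrow> regabs p x \<le> \<bar>x\<bar> + 1 / p"
  unfolding regabs_def by (rule real_le_lsqrt) (auto simp: power2_sum power_one_over inverse_eq_divide)

lemma powr_le_add_powr_div:
  fixes a c q r :: real
  assumes "0 < a" "0 < c" "0 \<le> q" "0 \<le> r"
  shows "a powr q \<le> c powr q + a powr (q + r) / c powr r"
proof (cases "a \<le> c")
  case True
  then have "a powr q \<le> c powr q" using assms by (intro powr_mono2) auto
  then show ?thesis by (simp add: add_increasing2)
next
  case False
  then have "a powr q * c powr r \<le> a powr q * a powr r"
    using assms by (intro mult_left_mono powr_mono2) auto
  then have "a powr q \<le> a powr (q + r) / c powr r"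
    using assms by (simp add: powr_add pos_le_divide_eq)
  then show ?thesis by (simp add: add_increasing)
qed

lemma powr_eq_mult_powr_minus_one: "0 < (a::real) \<Longrightarrow> a powr q = a * a powr (q - 1)"
  using powr_add[of a 1 "q - 1"] by simp

lemma powr_add_le:
  fixes u v p :: real
  assumes "0 \<le> u" "0 \<le> v" "0 \<le> p"
  shows "(u + v) powr p \<le> 2 powr p * (u powr p + v powr p)"
proof -
  have "(u + v) powr p \<le> (2 * max u v) powr p"
    using assms by (intro powr_mono2) auto
  also have "\<dots> = 2 powr p * max u v powr p"
    using assms by (simp add: powr_mult)
  also have "\<dots> \<le> 2 powr p * (u powr p + v powr p)"
    by (intro mult_left_mono) (auto simp: max_def)
  finally show ?thesis .
qed

lemma filterlim_powr_minus_one_at_top: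
  fixes l :: real
  assumes "1 < l" and "filterlim p at_top F"
  shows "filterlim (\<lambda>j. l powr (p j - 1)) at_top F"
proof -
  have "filterlim (\<lambda>j. ln l * (p j - 1)) at_top F"
    using assms filterlim_tendsto_add_at_top[OF tendsto_const[of "-1"] assms(2)]
    by (intro filterlim_tendsto_pos_mult_at_top[OF tendsto_const]) (auto simp: ln_gt_zero)
  then have "filterlim (\<lambda>j. exp (ln l * (p j - 1))) at_top F"
    by (rule filterlim_compose[OF exp_at_top])
  then show ?thesis using assms by (simp add: powr_def mult.commute)
qed

definition reg_norm :: "'a measure \<Rightarrow> real \<Rightarrow> ('a \<Rightarrow> real) \<Rightarrow> real" where
  "reg_norm M p f = ((1 / measure M (space M)) * (\<integral>x. regabs p (f x) powr p \<partial>M)) powr (1 / p)"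

definition reg_pairing :: "'a measure \<Rightarrow> real \<Rightarrow> ('a \<Rightarrow> real) \<Rightarrow> real" where
  "reg_pairing M p f = (\<integral>x. f x * (regabs p (f x) powr (p - 2) * f x /
     (measure M (space M) * reg_norm M p f powr (p - 1))) \<partial>M)"

lemma reg_pairing_nonneg: "0 \<le> reg_pairing M p f"
  unfolding reg_pairing_def
proof (intro integral_nonneg_AE AE_I2)
  fix x
  have "0 \<le> regabs p (f x) powr (p - 2) * (f x)\<^sup>2 / (measure M (space M) * reg_norm M p f powr (p - 1))"
    by simp
  then show "0 \<le> f x * (regabs p (f x) powr (p - 2) * f x / (measure M (space M) * reg_norm M p f powr (p - 1)))"
    by (simp add: power2_eq_square mult.left_commute)
qed

context finite_measure
begin

lemma integrable_regabs_powr: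
  assumes [measurable]: "f \<in> borel_measurable M"
    and "integrable M (\<lambda>x. \<bar>f x\<bar> powr p)" and "0 < p"
  shows "integrable M (\<lambda>x. regabs p (f x) powr p)"
proof (rule Bochner_Integration.integrable_bound)
  show "integrable M (\<lambda>x. 2 powr p * (\<bar>f x\<bar> powr p + (1 / p) powr p))"
    using assms by (intro integrable_mult_right Bochner_Integration.integrable_add) auto
  show "AE x in M. norm (regabs p (f x) powr p) \<le> norm (2 powr p * (\<bar>f x\<bar> powr p + (1 / p) powr p))"
  proof (rule AE_I2)
    fix x
    have "regabs p (f x) powr p \<le> (\<bar>f x\<bar> + 1 / p) powr p"
      using assms by (intro powr_mono2 regabs_le_abs_add) (auto intro: regabs_pos less_imp_le)
    also have "\<dots> \<le> 2 powr p * (\<bar>f x\<bar> powr p + (1 / p) powr p)"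
      using assms by (intro powr_add_le) auto
    finally show "norm (regabs p (f x) powr p) \<le> norm (2 powr p * (\<bar>f x\<bar> powr p + (1 / p) powr p))"
      by simp
  qed
qed (unfold regabs_def, measurable)

lemma reg_norm_powr:
  assumes "0 < measure M (space M)" and "p \<noteq> 0"
  shows "measure M (space M) * reg_norm M p f powr p = (\<integral>x. regabs p (f x) powr p \<partial>M)"
proof -
  have "0 \<le> (\<integral>x. regabs p (f x) powr p \<partial>M)" by (intro integral_nonneg_AE) auto
  then show ?thesis using assms unfolding reg_norm_def by (simp add: powr_powr)
qed

lemma reg_norm_ge_inverse:
  assumes [measurable]: "f \<in> borel_measurable M"
    and "integrable M (\<lambda>x. \<bar>f x\<bar> powr p)" and "0 < p" and "0 < measure M (space M)"
  shows "1 / p \<le> reg_norm M p f"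
proof -
  let ?m = "measure M (space M)"
  have "(\<integral>x. (1 / p) powr p \<partial>M) \<le> (\<integral>x. regabs p (f x) powr p \<partial>M)"
    using assms by (intro integral_mono integrable_regabs_powr powr_mono2 regabs_ge_inverse) auto
  then have "(1 / p) powr p \<le> (1 / ?m) * (\<integral>x. regabs p (f x) powr p \<partial>M)"
    using assms(4) by (simp add: field_simps)
  then have "((1 / p) powr p) powr (1 / p) \<le> reg_norm M p f"
    unfolding reg_norm_def using assms(3) by (intro powr_mono2) auto
  then show ?thesis using assms(3) by (simp add: powr_powr)
qed

lemma integrable_regabs_powr_minus_two:
  assumes [measurable]: "f \<in> borel_measurable M"
    and "integrable M (\<lambda>x. \<bar>f x\<bar> powr p)" and "2 \<le> p"
  shows "integrable M (\<lambda>x. regabs p (f x) powr (p - 2))"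
proof (rule Bochner_Integration.integrable_bound)
  show "integrable M (\<lambda>x. 1 + regabs p (f x) powr p)"
    using assms by (intro Bochner_Integration.integrable_add integrable_regabs_powr) auto
  show "AE x in M. norm (regabs p (f x) powr (p - 2)) \<le> norm (1 + regabs p (f x) powr p)"
  proof (rule AE_I2)
    fix x
    have "regabs p (f x) powr (p - 2) \<le> 1 powr (p - 2) + regabs p (f x) powr (p - 2 + 2) / 1 powr 2"
      using assms by (intro powr_le_add_powr_div regabs_pos) auto
    then show "norm (regabs p (f x) powr (p - 2)) \<le> norm (1 + regabs p (f x) powr p)"
      by simp
  qed
qed (unfold regabs_def, measurable)

lemma integral_regabs_powr_minus_two_le:
  assumes [measurable]: "f \<in> borel_measurable M"
    and "integrable M (\<lambda>x. \<bar>f x\<bar> powr p)" and "2 \<le> p" and "0 < measure M (space M)"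
  shows "(\<integral>x. regabs p (f x) powr (p - 2) \<partial>M) \<le> 2 * measure M (space M) * reg_norm M p f powr (p - 2)"
proof -
  let ?m = "measure M (space M)" and ?N = "reg_norm M p f"
  have N: "0 < ?N"
    using reg_norm_ge_inverse[of f p] assms by (smt (verit) divide_pos_pos)
  have "(\<integral>x. regabs p (f x) powr (p - 2) \<partial>M)
      \<le> (\<integral>x. ?N powr (p - 2) + regabs p (f x) powr (p - 2 + 2) / ?N powr 2 \<partial>M)"
    using assms N
    by (intro integral_mono integrable_regabs_powr_minus_two powr_le_add_powr_div regabs_pos)
      (auto intro!: Bochner_Integration.integrable_add integrable_divide integrable_regabs_powr)
  also have "\<dots> = ?m * ?N powr (p - 2) + ?m * ?N powr p / ?N powr 2"
    using assms integrable_regabs_powr[of f p] reg_norm_powr[of p f] by simp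
  also have "?N powr p = ?N powr (p - 2) * ?N powr 2"
    by (simp flip: powr_add)
  finally show ?thesis using N by simp
qed

lemma reg_pairing_eq:
  assumes [measurable]: "f \<in> borel_measurable M"
    and "integrable M (\<lambda>x. \<bar>f x\<bar> powr p)" and "2 \<le> p"
  shows "reg_pairing M p f = ((\<integral>x. regabs p (f x) powr p \<partial>M)
    - (\<integral>x. regabs p (f x) powr (p - 2) \<partial>M) / p\<^sup>2) / (measure M (space M) * reg_norm M p f powr (p - 1))"
proof -
  let ?D = "measure M (space M) * reg_norm M p f powr (p - 1)"
  have "f x * (regabs p (f x) powr (p - 2) * f x / ?D)
      = (regabs p (f x) powr p - regabs p (f x) powr (p - 2) / p\<^sup>2) / ?D" for x
  proof -
    let ?a = "regabs p (f x)"
    have "?a powr p = ?a powr (p - 2) * ?a powr 2"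
      by (simp flip: powr_add)
    also have "?a powr 2 = ?a\<^sup>2"
      using assms regabs_pos[of p "f x"] by (simp add: powr_numeral)
    finally have ap: "?a powr p = ?a powr (p - 2) * ?a\<^sup>2" .
    have "f x * (?a powr (p - 2) * f x / ?D) = ?a powr (p - 2) * (f x)\<^sup>2 / ?D"
      by (simp add: power2_eq_square)
    also have "\<dots> = (?a powr (p - 2) * ?a\<^sup>2 - ?a powr (p - 2) / p\<^sup>2) / ?D"
      by (simp add: power2_regabs algebra_simps)
    finally show ?thesis unfolding ap .
  qed
  then have "reg_pairing M p f
      = (\<integral>x. (regabs p (f x) powr p - regabs p (f x) powr (p - 2) / p\<^sup>2) / ?D \<partial>M)"
    unfolding reg_pairing_def by (simp only:)
  then show ?thesis
    using assms by (simp add: integrable_regabs_powr integrable_regabs_powr_minus_two)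
qed

lemma reg_pairing_ge:
  assumes [measurable]: "f \<in> borel_measurable M"
    and "integrable M (\<lambda>x. \<bar>f x\<bar> powr p)" and "2 \<le> p" and "0 < measure M (space M)"
  shows "reg_norm M p f - 2 / p \<le> reg_pairing M p f"
proof -
  let ?m = "measure M (space M)" and ?N = "reg_norm M p f"
  let ?P = "?N powr (p - 2)"
  have Np: "1 / p \<le> ?N" using assms by (intro reg_norm_ge_inverse) auto
  then have N: "0 < ?N" using assms by (smt (verit) divide_pos_pos)
  have powers: "?N powr (p - 1) = ?N * ?P" "?N powr p = ?N * (?N * ?P)"
    using N powr_eq_mult_powr_minus_one[of ?N "p - 1"] powr_eq_mult_powr_minus_one[of ?N p]
    by (simp_all add: algebra_simps)
  have "?N - 2 / p \<le> ?N - 2 / (p\<^sup>2 * ?N)"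
    using Np assms by (simp add: field_simps power2_eq_square)
  also have "\<dots> = (?m * ?N powr p - 2 * ?m * ?P / p\<^sup>2) / (?m * ?N powr (p - 1))"
    using N assms unfolding powers by (simp add: field_simps power2_eq_square)
  also have "\<dots> \<le> (?m * ?N powr p - (\<integral>x. regabs p (f x) powr (p - 2) \<partial>M) / p\<^sup>2) / (?m * ?N powr (p - 1))"
    using N assms integral_regabs_powr_minus_two_le[of f p] by (intro divide_right_mono diff_left_mono) auto
  also have "\<dots> = reg_pairing M p f"
    using assms by (simp add: reg_pairing_eq reg_norm_powr)
  finally show ?thesis .
qed

lemma integral_mult_le_reg_norm:
  assumes [measurable]: "f \<in> borel_measurable M"
    and "integrable M (\<lambda>x. \<bar>f x\<bar> powr p)" and "1 \<le> p" and "0 < measure M (space M)"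
    and [measurable]: "A \<in> sets M" "g \<in> borel_measurable M"
    and g: "\<And>x. x \<in> space M \<Longrightarrow> \<bar>g x\<bar> \<le> indicator A x" and "0 < l"
  shows "(\<integral>x. f x * g x \<partial>M) \<le> reg_norm M p f * (l * measure M A + measure M (space M) / l powr (p - 1))"
proof -
  let ?m = "measure M (space M)" and ?N = "reg_norm M p f" and ?a = "\<lambda>x. regabs p (f x)"
  define c where "c = l * ?N"
  have N: "0 < ?N"
    using reg_norm_ge_inverse[of f p] assms by (smt (verit) divide_pos_pos)
  then have c: "0 < c" unfolding c_def using assms by simp
  have bound: "\<bar>f x * g x\<bar> \<le> c * indicator A x + ?a x powr p / c powr (p - 1)"
    if x: "x \<in> space M" for x
  proof (cases "x \<in> A")
    case True
    have "\<bar>f x\<bar> * \<bar>g x\<bar> \<le> ?a x * 1"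
      using g[OF x] True abs_le_regabs[of "f x" p] by (intro mult_mono) auto
    also have "\<dots> \<le> c + ?a x powr p / c powr (p - 1)"
      using powr_le_add_powr_div[of "?a x" c 1 "p - 1"] regabs_pos[of p "f x"] assms c by simp
    finally show ?thesis using True c by (simp add: abs_mult)
  next
    case False
    then show ?thesis using g[OF x] c by simp
  qed
  have majorant_integrable: "integrable M (\<lambda>x. c * indicator A x + ?a x powr p / c powr (p - 1))"
    using assms by (intro Bochner_Integration.integrable_add integrable_mult_right integrable_divide
        integrable_regabs_powr) (auto simp: emeasure_finite less_top[symmetric])
  have "(\<integral>x. f x * g x \<partial>M) \<le> (\<integral>x. c * indicator A x + ?a x powr p / c powr (p - 1) \<partial>M)"
  proof (rule integral_mono[OF _ majorant_integrable])
    show "integrable M (\<lambda>x. f x * g x)"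
      by (rule Bochner_Integration.integrable_bound[OF majorant_integrable])
        (use bound c in \<open>auto intro!: AE_I2 order_trans[OF _ abs_ge_self]\<close>)
    show "f x * g x \<le> c * indicator A x + ?a x powr p / c powr (p - 1)" if "x \<in> space M" for x
      using bound[OF that] by linarith
  qed
  also have "\<dots> = c * measure M A + ?m * ?N powr p / c powr (p - 1)"
    using assms integrable_regabs_powr[of f p] reg_norm_powr[of p f]
    by (simp add: emeasure_finite less_top[symmetric])
  also have "\<dots> = ?N * (l * measure M A + ?m / l powr (p - 1))"
    using N assms powr_eq_mult_powr_minus_one[of ?N p]
    by (simp add: c_def powr_mult field_simps)
  finally show ?thesis .
qed

lemma eventually_reg_norm_gt:
  assumes "filterlim p at_top sequentially"
    and [measurable]: "\<And>j. f j \<in> borel_measurable M"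
    and "\<And>j. integrable M (\<lambda>x. \<bar>f j x\<bar> powr p j)"
    and [measurable]: "A \<in> sets M" "g \<in> borel_measurable M"
    and "\<And>x. x \<in> space M \<Longrightarrow> \<bar>g x\<bar> \<le> indicator A x" and "0 < measure M A"
    and "0 < u" "u < c"
    and "\<forall>\<^sub>F j in sequentially. c * measure M A < (\<integral>x. f j x * g x \<partial>M)"
  shows "\<forall>\<^sub>F j in sequentially. u < reg_norm M (p j) (f j)"
proof -
  let ?m = "measure M (space M)" and ?\<alpha> = "measure M A"
  have m: "0 < ?m" using bounded_measure[of A] assms by linarith
  obtain l where l: "1 < l" "l < c / u" using assms dense[of 1 "c / u"] by auto
  define K where "K = ?m / (?\<alpha> * (c / u - l))"
  have "\<forall>\<^sub>F j in sequentially. 1 \<le> p j"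
    using assms(1) by (simp add: filterlim_at_top)
  moreover have "\<forall>\<^sub>F j in sequentially. K < l powr (p j - 1)"
    using filterlim_powr_minus_one_at_top[OF l(1) assms(1)] by (simp add: filterlim_at_top_dense)
  ultimately show ?thesis using assms(10)
  proof eventually_elim
    case (elim j)
    let ?N = "reg_norm M (p j) (f j)"
    have "?m / l powr (p j - 1) < ?\<alpha> * (c / u - l)"
      using elim(2) l assms by (simp add: K_def field_simps)
    moreover have "0 \<le> ?N" by (simp add: reg_norm_def)
    ultimately have "?N * (l * ?\<alpha> + ?m / l powr (p j - 1)) \<le> ?N * (l * ?\<alpha> + ?\<alpha> * (c / u - l))"
      by (intro mult_left_mono) auto
    then have "c * ?\<alpha> < ?N * (?\<alpha> * c / u)"
      using elim(1,3) integral_mult_le_reg_norm[of "f j" "p j" A g l] assms m l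
      by (simp add: algebra_simps)
    then show ?case
      using assms by (simp add: field_simps)
  qed
qed

lemma eventually_reg_pairing_gt:
  assumes "filterlim p at_top sequentially"
    and [measurable]: "\<And>j. f j \<in> borel_measurable M"
    and "\<And>j. integrable M (\<lambda>x. \<bar>f j x\<bar> powr p j)"
    and [measurable]: "h \<in> borel_measurable M" and "integrable M h"
    and weak: "\<And>g. g \<in> borel_measurable M \<Longrightarrow> (\<And>x. x \<in> space M \<Longrightarrow> \<bar>g x\<bar> \<le> 1) \<Longrightarrow>
      (\<lambda>j. \<integral>x. f j x * g x \<partial>M) \<longlonglongrightarrow> (\<integral>x. h x * g x \<partial>M)"
    and "0 < t" "t < s" and "ereal s < esssup M (\<lambda>x. ereal \<bar>h x\<bar>)"
  shows "\<forall>\<^sub>F j in sequentially. t < reg_pairing M (p j) (f j)"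
proof -
  define A where "A = {x \<in> space M. s < \<bar>h x\<bar>}"
  define g where "g x = indicator A x * sgn (h x)" for x
  have A_sets[measurable]: "A \<in> sets M" and g_meas[measurable]: "g \<in> borel_measurable M"
    unfolding A_def g_def by measurable
  have g: "\<bar>g x\<bar> \<le> indicator A x" for x
    unfolding g_def by (simp add: abs_mult abs_sgn_eq)
  have "0 < emeasure M A"
    using esssup_pos_measure[of "\<lambda>x. ereal \<bar>h x\<bar>" M s] assms(9) unfolding A_def by simp
  then have \<alpha>: "0 < measure M A" by (simp add: emeasure_eq_measure)
  then have m: "0 < measure M (space M)" using bounded_measure[of A] by linarith
  define c where "c = (t + s) / 2"
  define u where "u = (t + c) / 2"
  have c: "t < c" "c < s" and u: "0 < u" "t < u" "u < c"
    using assms by (auto simp: c_def u_def field_simps)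
  have "(\<integral>x. s * indicator A x \<partial>M) \<le> (\<integral>x. h x * g x \<partial>M)"
  proof (rule integral_mono)
    show "integrable M (\<lambda>x. h x * g x)"
    proof (rule Bochner_Integration.integrable_bound[OF assms(5)])
      show "AE x in M. norm (h x * g x) \<le> norm (h x)"
      proof (rule AE_I2)
        fix x
        have "\<bar>g x\<bar> \<le> 1" using g[of x] by (simp split: split_indicator_asm)
        then show "norm (h x * g x) \<le> norm (h x)" by (simp add: abs_mult mult_left_le)
      qed
    qed measurable
    show "s * indicator A x \<le> h x * g x" for x
    proof (cases "x \<in> A")
      case True
      moreover have "h x * sgn (h x) = \<bar>h x\<bar>" by (simp add: sgn_if)
      ultimately have "s < h x * sgn (h x)" unfolding A_def by simp
      then show ?thesis using True unfolding g_def by simp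
    qed (simp add: g_def)
  qed (simp add: emeasure_finite less_top[symmetric])
  moreover have "c * measure M A < s * measure M A"
    using \<alpha> c by (intro mult_strict_right_mono) auto
  ultimately have "c * measure M A < (\<integral>x. h x * g x \<partial>M)"
    by simp
  moreover have "(\<lambda>j. \<integral>x. f j x * g x \<partial>M) \<longlonglongrightarrow> (\<integral>x. h x * g x \<partial>M)"
    using g by (intro weak) (auto intro: order_trans)
  ultimately have "\<forall>\<^sub>F j in sequentially. c * measure M A < (\<integral>x. f j x * g x \<partial>M)"
    by (rule order_tendstoD(1)[rotated])
  then have "\<forall>\<^sub>F j in sequentially. u < reg_norm M (p j) (f j)"
    using u c assms by (intro eventually_reg_norm_gt[OF assms(1-3) A_sets g_meas g \<alpha>]) auto
  moreover have "\<forall>\<^sub>F j in sequentially. max 2 (2 / (u - t)) \<le> p j"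
    using assms(1) unfolding filterlim_at_top by blast
  ultimately show ?thesis
  proof eventually_elim
    case (elim j)
    have "2 / p j \<le> u - t"
      using elim(2) u by (simp add: field_simps)
    moreover have "reg_norm M (p j) (f j) - 2 / p j \<le> reg_pairing M (p j) (f j)"
      using elim assms m by (intro reg_pairing_ge) auto
    ultimately show ?case
      using elim(1) by linarith
  qed
qed

lemma liminf_reg_pairing_ge_esssup:
  assumes "filterlim p at_top sequentially"
    and [measurable]: "\<And>j. f j \<in> borel_measurable M"
    and "\<And>j. integrable M (\<lambda>x. \<bar>f j x\<bar> powr p j)"
    and [measurable]: "h \<in> borel_measurable M" and "integrable M h"
    and "\<And>g. g \<in> borel_measurable M \<Longrightarrow> (\<And>x. x \<in> space M \<Longrightarrow> \<bar>g x\<bar> \<le> 1) \<Longrightarrow>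
      (\<lambda>j. \<integral>x. f j x * g x \<partial>M) \<longlonglongrightarrow> (\<integral>x. h x * g x \<partial>M)"
  shows "esssup M (\<lambda>x. ereal \<bar>h x\<bar>) \<le> liminf (\<lambda>j. ereal (reg_pairing M (p j) (f j)))"
proof (rule dense_le)
  fix y assume y: "y < esssup M (\<lambda>x. ereal \<bar>h x\<bar>)"
  show "y \<le> liminf (\<lambda>j. ereal (reg_pairing M (p j) (f j)))"
  proof (cases "y \<le> 0")
    case True
    have "y \<le> ereal (reg_pairing M (p j) (f j))" for j
      using True reg_pairing_nonneg[of M "p j" "f j"] order_trans[of y 0] by simp
    then show ?thesis
      by (intro Liminf_bounded always_eventually) auto
  next
    case False
    obtain z where z: "y < z" "z < esssup M (\<lambda>x. ereal \<bar>h x\<bar>)" using y dense by blast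
    with False obtain t s where "y = ereal t" "z = ereal s" "0 < t" "t < s"
      by (cases y; cases z) auto
    then show ?thesis
      using eventually_reg_pairing_gt[of p f h t s] assms z
      by (intro Liminf_bounded) (auto elim!: eventually_mono)
  qed
qed

end

lemma finite_measure_restrict_lebesgue:
  assumes "\<Omega> \<in> lmeasurable"
  shows "finite_measure (restrict_space lebesgue \<Omega>)"
proof (rule finite_measureI)
  have "emeasure (restrict_space lebesgue \<Omega>) \<Omega> = emeasure lebesgue \<Omega>"
    using assms by (intro emeasure_restrict_space) (auto dest: fmeasurableD)
  then show "emeasure (restrict_space lebesgue \<Omega>) (space (restrict_space lebesgue \<Omega>)) \<noteq> \<infinity>"
    using fmeasurableD2[OF assms] by (simp add: space_restrict_space)
qed

lemma set_integral_eq_integral_restrict_space: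
  fixes h :: "'a \<Rightarrow> real"
  assumes "\<Omega> \<in> sets M"
  shows "(LINT x:\<Omega>|M. h x) = (\<integral>x. h x \<partial>restrict_space M \<Omega>)"
  using integral_restrict_space[of \<Omega> M h] assms by (simp add: set_lebesgue_integral_def)

lemma dotLp_eq_reg_norm:
  "\<Omega> \<in> sets lebesgue \<Longrightarrow> dotLp \<Omega> p f = reg_norm (restrict_space lebesgue \<Omega>) p f"
  unfolding dotLp_def reg_norm_def
  by (simp add: set_integral_eq_integral_restrict_space space_restrict_space measure_restrict_space)

lemma mu_pairing_eq_reg_pairing:
  "\<Omega> \<in> sets lebesgue \<Longrightarrow> mu_pairing \<Omega> p f = reg_pairing (restrict_space lebesgue \<Omega>) p f"
  unfolding mu_pairing_def reg_pairing_def
  by (simp add: set_integral_eq_integral_restrict_space space_restrict_space measure_restrict_space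
      dotLp_eq_reg_norm)

lemma in_Lp_iff_restrict_space:
  assumes "\<Omega> \<in> sets lebesgue"
  shows "in_Lp \<Omega> q f \<longleftrightarrow> f \<in> borel_measurable (restrict_space lebesgue \<Omega>) \<and>
    integrable (restrict_space lebesgue \<Omega>) (\<lambda>x. \<bar>f x\<bar> powr q)"
  using assms unfolding in_Lp_def set_borel_measurable_def
  by (simp add: borel_measurable_restrict_space_iff set_integrable_eq)

lemma integrable_restrict_lebesgue_if_in_Linf:
  assumes "\<Omega> \<in> lmeasurable" and "in_Linf \<Omega> h"
  shows "integrable (restrict_space lebesgue \<Omega>) h"
proof -
  interpret finite_measure "restrict_space lebesgue \<Omega>"
    using assms(1) by (rule finite_measure_restrict_lebesgue)
  obtain C where "AE x in lebesgue. x \<in> \<Omega> \<longrightarrow> \<bar>h x\<bar> \<le> C"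
    using assms(2) unfolding in_Linf_def by blast
  then have "AE x in restrict_space lebesgue \<Omega>. norm (h x) \<le> C"
    using assms(1) by (simp add: AE_restrict_space_iff fmeasurableD)
  moreover have "h \<in> borel_measurable (restrict_space lebesgue \<Omega>)"
    using assms unfolding in_Linf_def set_borel_measurable_def
    by (simp add: borel_measurable_restrict_space_iff fmeasurableD)
  ultimately show ?thesis by (intro integrable_const_bound)
qed

lemma weak_conv_Lk_tendsto_bounded:
  assumes "\<Omega> \<in> lmeasurable" and "weak_conv_Lk \<Omega> 2 f h"
    and "g \<in> borel_measurable (restrict_space lebesgue \<Omega>)" and "\<And>x. x \<in> \<Omega> \<Longrightarrow> \<bar>g x\<bar> \<le> 1"
  shows "(\<lambda>j. \<integral>x. f j x * g x \<partial>restrict_space lebesgue \<Omega>) \<longlonglongrightarrow> (\<integral>x. h x * g x \<partial>restrict_space lebesgue \<Omega>)"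
proof -
  interpret finite_measure "restrict_space lebesgue \<Omega>"
    using assms(1) by (rule finite_measure_restrict_lebesgue)
  have "integrable (restrict_space lebesgue \<Omega>) (\<lambda>x. \<bar>g x\<bar> powr 2)"
    using assms(3,4) by (intro integrable_const_bound[where B = 1] AE_I2)
      (auto simp: space_restrict_space abs_square_le_1 powr_numeral)
  then have "in_Lp \<Omega> (2 / (2 - 1)) g"
    using assms(1,3) by (simp add: in_Lp_iff_restrict_space fmeasurableD)
  then show ?thesis
    using assms(1,2) unfolding weak_conv_Lk_def by (simp add: set_integral_eq_integral_restrict_space fmeasurableD)
qed

theorem mainTheorem12:
  fixes \<Omega> :: "'a::euclidean_space set"
    and p :: "nat \<Rightarrow> real"
    and \<xi> :: "nat \<Rightarrow> 'a \<Rightarrow> real"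
    and \<xi>inf :: "'a \<Rightarrow> real"
  assumes "bounded \<Omega>" and "open \<Omega>"
    and "filterlim p at_top sequentially"
    and "\<And>j. p j > 1"
    and "\<And>j. in_Lp \<Omega> (p j) (\<xi> j)"
    and "\<And>j. AE x in lebesgue. x \<in> \<Omega> \<longrightarrow> \<xi> j x \<ge> 0"
    and "in_Linf \<Omega> \<xi>inf"
    and "\<And>k. 1 < k \<Longrightarrow> weak_conv_Lk \<Omega> k \<xi> \<xi>inf"
  shows "liminf (\<lambda>j. ereal (mu_pairing \<Omega> (p j) (\<xi> j))) \<ge> Linf_norm \<Omega> \<xi>inf"
proof -
  let ?M = "restrict_space lebesgue \<Omega>"
  have \<Omega>: "\<Omega> \<in> lmeasurable" using assms(1,2) by (rule lmeasurable_open)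
  then have \<Omega>_sets: "\<Omega> \<in> sets lebesgue" by (rule fmeasurableD)
  interpret finite_measure ?M using \<Omega> by (rule finite_measure_restrict_lebesgue)
  have "esssup ?M (\<lambda>x. ereal \<bar>\<xi>inf x\<bar>) \<le> liminf (\<lambda>j. ereal (reg_pairing ?M (p j) (\<xi> j)))"
  proof (rule liminf_reg_pairing_ge_esssup)
    show "\<xi> j \<in> borel_measurable ?M" "integrable ?M (\<lambda>x. \<bar>\<xi> j x\<bar> powr p j)" for j
      using assms(5)[of j] \<Omega>_sets by (simp_all add: in_Lp_iff_restrict_space)
    show "\<xi>inf \<in> borel_measurable ?M" "integrable ?M \<xi>inf"
      using integrable_restrict_lebesgue_if_in_Linf[OF \<Omega> assms(7)] by auto
    show "(\<lambda>j. \<integral>x. \<xi> j x * g x \<partial>?M) \<longlonglongrightarrow> (\<integral>x. \<xi>inf x * g x \<partial>?M)"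
      if "g \<in> borel_measurable ?M" and "\<And>x. x \<in> space ?M \<Longrightarrow> \<bar>g x\<bar> \<le> 1" for g
      using that assms(8)[of 2] \<Omega> by (intro weak_conv_Lk_tendsto_bounded) (auto simp: space_restrict_space)
  qed (fact assms(3))
  then show ?thesis
    unfolding Linf_norm_def mu_pairing_eq_reg_pairing[OF \<Omega>_sets] .
qed

end
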